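(* Let $f:\mathbb{R}^{d_0}\to\mathbb{R}$ be an $L$-layer ReLU network with weights $W^{(i)}\in\mathbb{R}^{d_i\times d_{i-1}}$ and biases $b^{(i)}\in\mathbb{R}^{d_i}$ ($1\le i\le L$, $d_L=1$), defined by $\hat z^{(0)}(x)=x$, $z^{(i)}(x)=W^{(i)}\hat z^{(i-1)}(x)+b^{(i)}$, $\hat z^{(i)}(x)=\mathrm{ReLU}(z^{(i)}(x))$, $f(x)=z^{(L)}(x)$. Let $\mathcal{C}\subseteq\mathbb{R}^{d_0}$ be an input set, let $\mathcal{Z}$ be a set of neuron split constraints given by disjoint index sets $\mathcal{Z}^{+(i)},\mathcal{Z}^{-(i)}\subseteq\{1,\dots,d_i\}$ ($1\le i\le L-1$), and let $l^{(i)}\le z^{(i)}(x)\le u^{(i)}$ be pre-ReLU bounds ($1\le i\le L$) valid for all $x\in\mathcal{C}$ whose pre-activations satisfy the split constraints. Fix any free parameters $\alpha^{(i)}_j\in[0,1]$. Then $$\min_{x\in\mathcal{C},\,z\in\mathcal{Z}} f(x)\;\ge\;\max_{\beta\ge 0}\;\min_{x\in\mathcal{C}}\;(a+P\beta)^\top x+q^\top\beta+c,$$ where $\beta=[\beta^{(1)\top}\ \cdots\ \beta^{(L-1)\top}]^\top$ with $\beta^{(i)}\in\mathbb{R}^{d_i}$, and the quantities $a\in\mathbb{R}^{d_0}$, $P\in\mathbb{R}^{d_0\times\sum_{i=1}^{L-1}d_i}$, $q\in\mathbb{R}^{\sum_{i=1}^{L-1}d_i}$, $c\in\mathbb{R}$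 (which depend on $W^{(i)},b^{(i)},l^{(i)},u^{(i)}$, on $\alpha$ and, through the matrices $D^{(i)}$ and vectors $\underline{b}^{(i)}$ below, on $\beta$) are defined as follows: $$a=\big[\Omega(L,1)W^{(1)}\big]^\top,\qquad P=[P_1^\top\ \cdots\ P_{L-1}^\top],\quad P_i=S^{(i)}\Omega(i,1)W^{(1)}\in\mathbb{R}^{d_i\times d_0},$$ $$q=[q_1^\top\ \cdots\ q_{L-1}^\top]^\top,\quad q_i=\sum_{k=1}^{i}S^{(i)}\Omega(i,k)b^{(k)}+\sum_{k=2}^{i}S^{(i)}\Omega(i,k)W^{(k)}\underline{b}^{(k-1)},$$ $$c=\sum_{i=1}^{L}\Omega(L,i)b^{(i)}+\sum_{i=2}^{L}\Omega(L,i)W^{(i)}\underline{b}^{(i-1)}.$$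
   Context: Split constraints: $z\in\mathcal{Z}$ means $z^{(i)}_j\ge 0$ for all $j\in\mathcal{Z}^{+(i)}$ and $z^{(i)}_j<0$ for all $j\in\mathcal{Z}^{-(i)}$; the left-hand minimum is over $x\in\mathcal{C}$ whose pre-activation vector $z=(z^{(1)}(x),\dots,z^{(L-1)}(x))$ lies in $\mathcal{Z}$. $S^{(i)}\in\mathbb{R}^{d_i\times d_i}$ is diagonal with $S^{(i)}_{j,j}=-1$ if $j\in\mathcal{Z}^{+(i)}$, $+1$ if $j\in\mathcal{Z}^{-(i)}$, and $0$ otherwise. For $1\le i\le k\le L$, $\Omega(i,i)=I$ and $\Omega(k+1,i)=W^{(k+1)}D^{(k)}\Omega(k,i)$. The row vectors $A^{(i)}\in\mathbb{R}^{1\times d_i}$ are defined by $A^{(L-1)}=W^{(L)}$ and $A^{(i)}=(A^{(i+1)}D^{(i+1)}+\beta^{(i+1)\top}S^{(i+1)})W^{(i+1)}$ for $0\le i\le L-2$. For $1\le i\le L-1$, $D^{(i)}$ is diagonal with $D^{(i)}_{j,j}=1$ if $l^{(i)}_j\ge0$ or $j\in\mathcal{Z}^{+(i)}$; $0$ if $u^{(i)}_j\le 0$ or $j\in\mathcal{Z}^{-(i)}$; $\alpha^{(i)}_j$ if $u^{(i)}_j>0>l^{(i)}_j$, $j\notin\mathcal{Z}^{+(i)}\cup\mathcal{Z}^{-(i)}$ and $A^{(i)}_{1,j}\ge 0$; and $\frac{u^{(i)}_j}{u^{(i)}_j-l^{(i)}_j}$ if $u^{(i)}_j>0>l^{(i)}_j$,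 $j\notin\mathcal{Z}^{+(i)}\cup\mathcal{Z}^{-(i)}$ and $A^{(i)}_{1,j}<0$. The vector $\underline{b}^{(i)}$ has $\underline{b}^{(i)}_j=-\frac{u^{(i)}_jl^{(i)}_j}{u^{(i)}_j-l^{(i)}_j}$ if $u^{(i)}_j>0>l^{(i)}_j$, $j\notin\mathcal{Z}^{+(i)}\cup\mathcal{Z}^{-(i)}$ and $A^{(i)}_{1,j}<0$, and $\underline{b}^{(i)}_j=0$ otherwise. (These are computed top-down: $A^{(L-1)}$, then $D^{(L-1)},\underline{b}^{(L-1)}$, then $A^{(L-2)}$, etc.) *)

theory Defs
  imports Complex_Main "HOL-Library.Extended_Real"
begin

(* Conventions: layers are indexed 1..L, neurons of layer i are indexed 0..d i - 1
   (the paper uses 1..d_i).  Vectors are functions nat => real, matrices are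
   functions nat => nat => real (row, column); only entries within the stated
   dimensions are ever used.  W i j k is entry (j,k) of W^(i), b i j entry j of b^(i). *)

definition relu :: "real \<Rightarrow> real" where
  "relu t = max 0 t"

fun zhat :: "(nat \<Rightarrow> nat) \<Rightarrow> (nat \<Rightarrow> nat \<Rightarrow> nat \<Rightarrow> real) \<Rightarrow> (nat \<Rightarrow> nat \<Rightarrow> real)
             \<Rightarrow> nat \<Rightarrow> (nat \<Rightarrow> real) \<Rightarrow> (nat \<Rightarrow> real)" where
  "zhat d W b 0 x = x"
| "zhat d W b (Suc i) x = (\<lambda>j. relu ((\<Sum>k<d i. W (Suc i) j k * zhat d W b i x k) + b (Suc i) j))"

definition zpre :: "(nat \<Rightarrow> nat) \<Rightarrow> (nat \<Rightarrow> nat \<Rightarrow> nat \<Rightarrow> real) \<Rightarrow> (nat \<Rightarrow> nat \<Rightarrow> real)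
             \<Rightarrow> nat \<Rightarrow> (nat \<Rightarrow> real) \<Rightarrow> (nat \<Rightarrow> real)" where
  "zpre d W b i x = (\<lambda>j. (\<Sum>k<d (i - 1). W i j k * zhat d W b (i - 1) x k) + b i j)"

definition net_out :: "nat \<Rightarrow> (nat \<Rightarrow> nat) \<Rightarrow> (nat \<Rightarrow> nat \<Rightarrow> nat \<Rightarrow> real) \<Rightarrow> (nat \<Rightarrow> nat \<Rightarrow> real)
             \<Rightarrow> (nat \<Rightarrow> real) \<Rightarrow> real" where
  "net_out L d W b x = zpre d W b L x 0"

definition split_sat :: "nat \<Rightarrow> (nat \<Rightarrow> nat) \<Rightarrow> (nat \<Rightarrow> nat \<Rightarrow> nat \<Rightarrow> real) \<Rightarrow> (nat \<Rightarrow> nat \<Rightarrow> real)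
             \<Rightarrow> (nat \<Rightarrow> nat set) \<Rightarrow> (nat \<Rightarrow> nat set) \<Rightarrow> (nat \<Rightarrow> real) \<Rightarrow> bool" where
  "split_sat L d W b Zp Zn x =
     (\<forall>i\<in>{1..L-1}. (\<forall>j\<in>Zp i. zpre d W b i x j \<ge> 0) \<and> (\<forall>j\<in>Zn i. zpre d W b i x j < 0))"

definition Sdiag :: "(nat \<Rightarrow> nat set) \<Rightarrow> (nat \<Rightarrow> nat set) \<Rightarrow> nat \<Rightarrow> nat \<Rightarrow> real" where
  "Sdiag Zp Zn i j = (if j \<in> Zp i then -1 else if j \<in> Zn i then 1 else 0)"

(* diagonal entry D^(i)_{j,j}, given the value a = A^(i)_{1,j} *)
definition Dentry :: "(nat \<Rightarrow> nat \<Rightarrow> real) \<Rightarrow> (nat \<Rightarrow> nat \<Rightarrow> real) \<Rightarrow> (nat \<Rightarrow> nat set) \<Rightarrow> (nat \<Rightarrow> nat set)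
             \<Rightarrow> (nat \<Rightarrow> nat \<Rightarrow> real) \<Rightarrow> nat \<Rightarrow> real \<Rightarrow> nat \<Rightarrow> real" where
  "Dentry l u Zp Zn \<alpha> i a j =
     (if l i j \<ge> 0 \<or> j \<in> Zp i then 1
      else if u i j \<le> 0 \<or> j \<in> Zn i then 0
      else if a \<ge> 0 then \<alpha> i j
      else u i j / (u i j - l i j))"

(* entry \<underline>b^(i)_j, given the value a = A^(i)_{1,j} *)
definition bentry :: "(nat \<Rightarrow> nat \<Rightarrow> real) \<Rightarrow> (nat \<Rightarrow> nat \<Rightarrow> real) \<Rightarrow> (nat \<Rightarrow> nat set) \<Rightarrow> (nat \<Rightarrow> nat set)
             \<Rightarrow> nat \<Rightarrow> real \<Rightarrow> nat \<Rightarrow> real" where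
  "bentry l u Zp Zn i a j =
     (if u i j > 0 \<and> 0 > l i j \<and> j \<notin> Zp i \<and> j \<notin> Zn i \<and> a < 0
      then - (u i j * l i j) / (u i j - l i j) else 0)"

(* Atop ... n = A^(L-1-n), computed top-down *)
fun Atop :: "nat \<Rightarrow> (nat \<Rightarrow> nat) \<Rightarrow> (nat \<Rightarrow> nat \<Rightarrow> nat \<Rightarrow> real) \<Rightarrow> (nat \<Rightarrow> nat \<Rightarrow> real) \<Rightarrow> (nat \<Rightarrow> nat \<Rightarrow> real)
             \<Rightarrow> (nat \<Rightarrow> nat set) \<Rightarrow> (nat \<Rightarrow> nat set) \<Rightarrow> (nat \<Rightarrow> nat \<Rightarrow> real) \<Rightarrow> (nat \<Rightarrow> nat \<Rightarrow> real)
             \<Rightarrow> nat \<Rightarrow> nat \<Rightarrow> real" where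
  "Atop L d W l u Zp Zn \<alpha> \<beta> 0 = (\<lambda>j. W L 0 j)"
| "Atop L d W l u Zp Zn \<alpha> \<beta> (Suc n) =
     (\<lambda>j. \<Sum>k<d (L - 1 - n).
        (Atop L d W l u Zp Zn \<alpha> \<beta> n k * Dentry l u Zp Zn \<alpha> (L - 1 - n) (Atop L d W l u Zp Zn \<alpha> \<beta> n k) k
         + \<beta> (L - 1 - n) k * Sdiag Zp Zn (L - 1 - n) k) * W (L - 1 - n) k j)"

definition Arow where
  "Arow L d W l u Zp Zn \<alpha> \<beta> i = Atop L d W l u Zp Zn \<alpha> \<beta> (L - 1 - i)"

definition Dmat where
  "Dmat L d W l u Zp Zn \<alpha> \<beta> i j = Dentry l u Zp Zn \<alpha> i (Arow L d W l u Zp Zn \<alpha> \<beta> i j) j"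

definition blow where
  "blow L d W l u Zp Zn \<alpha> \<beta> i j = bentry l u Zp Zn i (Arow L d W l u Zp Zn \<alpha> \<beta> i j) j"

(* Om ... i n = \<Omega>(i+n, i), a d_(i+n) x d_i matrix *)
fun Om :: "nat \<Rightarrow> (nat \<Rightarrow> nat) \<Rightarrow> (nat \<Rightarrow> nat \<Rightarrow> nat \<Rightarrow> real) \<Rightarrow> (nat \<Rightarrow> nat \<Rightarrow> real) \<Rightarrow> (nat \<Rightarrow> nat \<Rightarrow> real)
             \<Rightarrow> (nat \<Rightarrow> nat set) \<Rightarrow> (nat \<Rightarrow> nat set) \<Rightarrow> (nat \<Rightarrow> nat \<Rightarrow> real) \<Rightarrow> (nat \<Rightarrow> nat \<Rightarrow> real)
             \<Rightarrow> nat \<Rightarrow> nat \<Rightarrow> nat \<Rightarrow> nat \<Rightarrow> real" where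
  "Om L d W l u Zp Zn \<alpha> \<beta> i 0 = (\<lambda>r c. if r = c then 1 else 0)"
| "Om L d W l u Zp Zn \<alpha> \<beta> i (Suc n) =
     (\<lambda>r c. \<Sum>m<d (i + n). W (i + n + 1) r m * Dmat L d W l u Zp Zn \<alpha> \<beta> (i + n) m
                         * Om L d W l u Zp Zn \<alpha> \<beta> i n m c)"

definition Omega where
  "Omega L d W l u Zp Zn \<alpha> \<beta> k i = Om L d W l u Zp Zn \<alpha> \<beta> i (k - i)"

definition avec where
  "avec L d W l u Zp Zn \<alpha> \<beta> j = (\<Sum>m<d 1. Omega L d W l u Zp Zn \<alpha> \<beta> L 1 0 m * W 1 m j)"

definition Pblock where
  "Pblock L d W l u Zp Zn \<alpha> \<beta> i r j =
     Sdiag Zp Zn i r * (\<Sum>m<d 1. Omega L d W l u Zp Zn \<alpha> \<beta> i 1 r m * W 1 m j)"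

definition Pbeta where
  "Pbeta L d W l u Zp Zn \<alpha> \<beta> j =
     (\<Sum>i\<in>{1..L-1}. \<Sum>r<d i. Pblock L d W l u Zp Zn \<alpha> \<beta> i r j * \<beta> i r)"

definition qblock where
  "qblock L d W b l u Zp Zn \<alpha> \<beta> i r =
     (\<Sum>k\<in>{1..i}. Sdiag Zp Zn i r * (\<Sum>m<d k. Omega L d W l u Zp Zn \<alpha> \<beta> i k r m * b k m))
   + (\<Sum>k\<in>{2..i}. Sdiag Zp Zn i r * (\<Sum>m<d k. Omega L d W l u Zp Zn \<alpha> \<beta> i k r m
                        * (\<Sum>p<d (k - 1). W k m p * blow L d W l u Zp Zn \<alpha> \<beta> (k - 1) p)))"

definition qbeta where
  "qbeta L d W b l u Zp Zn \<alpha> \<beta> =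
     (\<Sum>i\<in>{1..L-1}. \<Sum>r<d i. qblock L d W b l u Zp Zn \<alpha> \<beta> i r * \<beta> i r)"

definition cconst where
  "cconst L d W b l u Zp Zn \<alpha> \<beta> =
     (\<Sum>i\<in>{1..L}. \<Sum>m<d i. Omega L d W l u Zp Zn \<alpha> \<beta> L i 0 m * b i m)
   + (\<Sum>i\<in>{2..L}. \<Sum>m<d i. Omega L d W l u Zp Zn \<alpha> \<beta> L i 0 m
                        * (\<Sum>p<d (i - 1). W i m p * blow L d W l u Zp Zn \<alpha> \<beta> (i - 1) p))"

definition bound_obj where
  "bound_obj L d W b l u Zp Zn \<alpha> \<beta> x =
     (\<Sum>j<d 0. (avec L d W l u Zp Zn \<alpha> \<beta> j + Pbeta L d W l u Zp Zn \<alpha> \<beta> j) * x j)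
     + qbeta L d W b l u Zp Zn \<alpha> \<beta> + cconst L d W b l u Zp Zn \<alpha> \<beta>"

end

theory Submission
  imports Defs
begin

text \<open>Replacing every ReLU by its linear relaxation \<open>D\<^sub>i z + b_low\<^sub>i\<close> yields a relaxed
  network whose pre-activations \<open>y\<^sub>i\<close> are affine in \<open>x\<close>; solving their recurrence with the
  transfer matrices \<open>\<Omega>\<close> shows that the bound objective is \<open>y\<^sub>L + \<Sum>\<^sub>i \<beta>\<^sub>i\<^sup>T S\<^sub>i y\<^sub>i\<close>.
  Weighted with the backward rows \<open>A\<^sub>i\<close>, the errors \<open>z\<^sub>i - y\<^sub>i\<close> of the true network
  telescope, and \<open>f(x) - bound = \<Sum>\<^sub>i A\<^sub>i (ReLU(z\<^sub>i) - D\<^sub>i z\<^sub>i - b_low\<^sub>i) - \<Sum>\<^sub>i \<beta>\<^sub>i\<^sup>T S\<^sub>i z\<^sub>i\<close>.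
  The first sum is nonnegative because \<open>D\<^sub>i\<close> and \<open>b_low\<^sub>i\<close> use the lower or the upper
  relaxation according to the sign of \<open>A\<^sub>i\<close>; the second is nonpositive by the split
  constraints and \<open>\<beta> \<ge> 0\<close>.\<close>

lemma sum_vec_mat_vec_assoc:
  fixes f :: "nat \<Rightarrow> 'a::comm_semiring_0"
  shows "(\<Sum>m<M. (\<Sum>c<N. f c * g c m) * t m) = (\<Sum>c<N. f c * (\<Sum>m<M. g c m * t m))"
proof -
  have "(\<Sum>m<M. (\<Sum>c<N. f c * g c m) * t m) = (\<Sum>m<M. \<Sum>c<N. f c * (g c m * t m))"
    by (simp add: sum_distrib_right mult.assoc)
  also have "\<dots> = (\<Sum>c<N. f c * (\<Sum>m<M. g c m * t m))"
    by (subst sum.swap) (simp add: sum_distrib_left)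
  finally show ?thesis .
qed

lemma relu_ge_scaled:
  assumes "0 \<le> a" "a \<le> 1"
  shows "a * z \<le> relu z"
  using assms mult_left_le_one_le[of z a] mult_nonneg_nonpos[of a z]
  by (cases "z \<ge> 0") (auto simp: relu_def)

lemma relu_le_chord:
  fixes l u z :: real
  assumes "l \<le> z" "z \<le> u" "l < 0" "0 < u"
  shows "relu z \<le> u / (u - l) * z + - (u * l) / (u - l)"
proof -
  have "relu z * (u - l) \<le> u * (z - l)"
  proof (cases "z \<ge> 0")
    case True
    have "z * - l \<le> u * - l"
      using assms by (intro mult_right_mono) auto
    then show ?thesis
      using True by (simp add: relu_def algebra_simps)
  qed (use assms in \<open>simp add: relu_def\<close>)
  then have "relu z \<le> u * (z - l) / (u - l)"
    using assms by (simp add: le_divide_eq)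
  then show ?thesis
    by (simp add: right_diff_distrib diff_divide_distrib)
qed

text \<open>For an unstable neuron \<open>Dentry\<close> and \<open>bentry\<close> pick the lower line \<open>\<alpha> z\<close> when the
  weight \<open>a\<close> is nonnegative and the upper chord when it is negative.\<close>

lemma relu_relaxation_residual_nonneg:
  fixes z :: real
  assumes "l i j \<le> z" "z \<le> u i j"
    and "j \<in> Zp i \<Longrightarrow> 0 \<le> z" "j \<in> Zn i \<Longrightarrow> z < 0"
    and "0 \<le> \<alpha> i j" "\<alpha> i j \<le> 1"
  shows "0 \<le> a * (relu z - Dentry l u Zp Zn \<alpha> i a j * z - bentry l u Zp Zn i a j)"
proof -
  consider "l i j \<ge> 0 \<or> j \<in> Zp i"
    | "\<not> (l i j \<ge> 0 \<or> j \<in> Zp i)" "u i j \<le> 0 \<or> j \<in> Zn i"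
    | "\<not> (l i j \<ge> 0 \<or> j \<in> Zp i)" "\<not> (u i j \<le> 0 \<or> j \<in> Zn i)" "a \<ge> 0"
    | "\<not> (l i j \<ge> 0 \<or> j \<in> Zp i)" "\<not> (u i j \<le> 0 \<or> j \<in> Zn i)" "a < 0"
    by linarith
  then show ?thesis
  proof cases
    case 1
    then have "relu z = z"
      using assms by (auto simp: relu_def)
    with 1 show ?thesis
      by (auto simp: Dentry_def bentry_def)
  next
    case 2
    then show ?thesis
      using assms by (auto simp: Dentry_def bentry_def relu_def)
  next
    case 3
    then show ?thesis
      using assms relu_ge_scaled[of "\<alpha> i j" z] by (auto simp: Dentry_def bentry_def)
  next
    case 4
    then have "relu z - Dentry l u Zp Zn \<alpha> i a j * z - bentry l u Zp Zn i a j \<le> 0"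
      using assms relu_le_chord[of "l i j" z "u i j"] by (auto simp: Dentry_def bentry_def)
    then show ?thesis
      using 4 by (simp add: mult_nonpos_nonpos)
  qed
qed

lemma zhat_Suc_eq_relu: "zhat d W b (Suc i) x j = relu (zpre d W b (Suc i) x j)"
  by (simp add: zpre_def)

context
  fixes L :: nat and d :: "nat \<Rightarrow> nat"
    and W :: "nat \<Rightarrow> nat \<Rightarrow> nat \<Rightarrow> real" and b :: "nat \<Rightarrow> nat \<Rightarrow> real"
    and Zp Zn :: "nat \<Rightarrow> nat set"
    and l u :: "nat \<Rightarrow> nat \<Rightarrow> real"
    and \<alpha> \<beta> :: "nat \<Rightarrow> nat \<Rightarrow> real"
    and x :: "nat \<Rightarrow> real"
begin

abbreviation "A \<equiv> Arow L d W l u Zp Zn \<alpha> \<beta>"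
abbreviation "D \<equiv> Dmat L d W l u Zp Zn \<alpha> \<beta>"
abbreviation "b_low \<equiv> blow L d W l u Zp Zn \<alpha> \<beta>"
abbreviation "S \<equiv> Sdiag Zp Zn"
abbreviation "\<Omega> \<equiv> Omega L d W l u Zp Zn \<alpha> \<beta>"

lemma Omega_diag_sum:
  assumes "r < d k"
  shows "(\<Sum>m<d k. \<Omega> k k r m * t m) = t r"
proof -
  have "(\<Sum>m<d k. \<Omega> k k r m * t m) = (\<Sum>m<d k. if r = m then t m else 0)"
    by (rule sum.cong) (auto simp: Omega_def)
  then show ?thesis
    using assms by simp
qed

lemma Omega_Suc_sum:
  assumes "i \<le> k"
  shows "(\<Sum>m<d i. \<Omega> (Suc k) i r m * t m) = (\<Sum>c<d k. W (Suc k) r c * D k c * (\<Sum>m<d i. \<Omega> k i c m * t m))"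
proof -
  have "Suc k - i = Suc (k - i)" "i + (k - i) = k"
    using assms by auto
  then have "\<Omega> (Suc k) i r m = (\<Sum>c<d k. W (Suc k) r c * D k c * \<Omega> k i c m)" for m
    by (simp add: Omega_def mult.assoc)
  then show ?thesis
    by (simp add: sum_vec_mat_vec_assoc)
qed

lemma Omega_solves_recurrence:
  fixes y v :: "nat \<Rightarrow> nat \<Rightarrow> real"
  assumes y_1: "\<And>r. r < d 1 \<Longrightarrow> y 1 r = v 1 r"
    and y_Suc: "\<And>k r. 1 \<le> k \<Longrightarrow> r < d (Suc k) \<Longrightarrow>
      y (Suc k) r = (\<Sum>c<d k. W (Suc k) r c * D k c * y k c) + v (Suc k) r"
    and "1 \<le> k" "r < d k"
  shows "y k r = (\<Sum>i\<in>{1..k}. \<Sum>m<d i. \<Omega> k i r m * v i m)"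
  using assms(3,4)
proof (induction k arbitrary: r rule: nat_induct_at_least)
  case base
  then show ?case
    using y_1 by (simp add: Omega_diag_sum)
next
  case (Suc k)
  have "{1..Suc k} = insert (Suc k) {1..k}"
    by auto
  then have "(\<Sum>i\<in>{1..Suc k}. \<Sum>m<d i. \<Omega> (Suc k) i r m * v i m)
      = (\<Sum>i\<in>{1..k}. \<Sum>m<d i. \<Omega> (Suc k) i r m * v i m) + v (Suc k) r"
    using Suc.prems by (simp add: Omega_diag_sum)
  also have "(\<Sum>i\<in>{1..k}. \<Sum>m<d i. \<Omega> (Suc k) i r m * v i m)
      = (\<Sum>i\<in>{1..k}. \<Sum>c<d k. W (Suc k) r c * D k c * (\<Sum>m<d i. \<Omega> k i c m * v i m))"
    by (intro sum.cong refl Omega_Suc_sum) auto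
  also have "\<dots> = (\<Sum>c<d k. W (Suc k) r c * D k c * (\<Sum>i\<in>{1..k}. \<Sum>m<d i. \<Omega> k i c m * v i m))"
    by (simp only: sum_distrib_left) (rule sum.swap)
  also have "\<dots> = (\<Sum>c<d k. W (Suc k) r c * D k c * y k c)"
    using Suc.IH by simp
  finally show ?case
    using Suc by (simp add: y_Suc)
qed

fun relaxed_post :: "nat \<Rightarrow> nat \<Rightarrow> real" where
  "relaxed_post 0 = x"
| "relaxed_post (Suc i) = (\<lambda>j. D (Suc i) j * ((\<Sum>k<d i. W (Suc i) j k * relaxed_post i k) + b (Suc i) j)
     + b_low (Suc i) j)"

definition relaxed_pre :: "nat \<Rightarrow> nat \<Rightarrow> real" where
  "relaxed_pre i j = (\<Sum>k<d (i - 1). W i j k * relaxed_post (i - 1) k) + b i j"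

lemma relaxed_post_Suc: "relaxed_post (Suc i) j = D (Suc i) j * relaxed_pre (Suc i) j + b_low (Suc i) j"
  by (simp add: relaxed_pre_def)

definition relaxed_offset :: "nat \<Rightarrow> nat \<Rightarrow> real" where
  "relaxed_offset i r = (\<Sum>p<d (i - 1). W i r p * (if i = 1 then x p else b_low (i - 1) p)) + b i r"

lemma relaxed_pre_Suc:
  assumes "1 \<le> k"
  shows "relaxed_pre (Suc k) r = (\<Sum>c<d k. W (Suc k) r c * D k c * relaxed_pre k c) + relaxed_offset (Suc k) r"
proof -
  obtain k' where "k = Suc k'"
    using assms by (cases k) auto
  then show ?thesis
    by (simp add: relaxed_pre_def relaxed_offset_def relaxed_post_Suc[of k', folded relaxed_pre_def]
        algebra_simps sum.distrib)
qed

definition input_term :: "nat \<Rightarrow> nat \<Rightarrow> real" where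
  "input_term k r = (\<Sum>m<d 1. \<Omega> k 1 r m * (\<Sum>j<d 0. W 1 m j * x j))"

definition bias_term :: "nat \<Rightarrow> nat \<Rightarrow> real" where
  "bias_term k r = (\<Sum>i\<in>{1..k}. \<Sum>m<d i. \<Omega> k i r m * b i m)"

definition relax_term :: "nat \<Rightarrow> nat \<Rightarrow> real" where
  "relax_term k r = (\<Sum>i\<in>{2..k}. \<Sum>m<d i. \<Omega> k i r m * (\<Sum>p<d (i - 1). W i m p * b_low (i - 1) p))"

lemma Omega_relaxed_offset_sum:
  assumes "1 \<le> k"
  shows "(\<Sum>i\<in>{1..k}. \<Sum>m<d i. \<Omega> k i r m * relaxed_offset i m)
    = input_term k r + bias_term k r + relax_term k r"
proof -
  let ?w = "\<lambda>i m. \<Sum>p<d (i - 1). W i m p * (if i = 1 then x p else b_low (i - 1) p)"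
  have "(\<Sum>i\<in>{2..k}. \<Sum>m<d i. \<Omega> k i r m * ?w i m) = relax_term k r"
    unfolding relax_term_def by (intro sum.cong refl) auto
  moreover have "{1..k} = insert 1 {2..k}"
    using assms by auto
  ultimately have "(\<Sum>i\<in>{1..k}. \<Sum>m<d i. \<Omega> k i r m * ?w i m) = input_term k r + relax_term k r"
    by (simp add: input_term_def)
  then show ?thesis
    by (simp add: relaxed_offset_def bias_term_def distrib_left sum.distrib)
qed

lemma relaxed_pre_closed_form:
  assumes "1 \<le> k" "r < d k"
  shows "relaxed_pre k r = input_term k r + bias_term k r + relax_term k r"
proof -
  have "relaxed_pre k r = (\<Sum>i\<in>{1..k}. \<Sum>m<d i. \<Omega> k i r m * relaxed_offset i m)"
    using assms by (intro Omega_solves_recurrence relaxed_pre_Suc)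
      (auto simp: relaxed_pre_def relaxed_offset_def)
  then show ?thesis
    using Omega_relaxed_offset_sum[OF assms(1)] by simp
qed

lemma bound_obj_eq_terms:
  "bound_obj L d W b l u Zp Zn \<alpha> \<beta> x = (input_term L 0 + bias_term L 0 + relax_term L 0)
     + (\<Sum>i\<in>{1..L-1}. \<Sum>r<d i. \<beta> i r * S i r * (input_term i r + bias_term i r + relax_term i r))"
proof -
  have a: "(\<Sum>j<d 0. avec L d W l u Zp Zn \<alpha> \<beta> j * x j) = input_term L 0"
    unfolding avec_def input_term_def by (rule sum_vec_mat_vec_assoc)
  have "(\<Sum>j<d 0. Pbeta L d W l u Zp Zn \<alpha> \<beta> j * x j)
      = (\<Sum>j<d 0. \<Sum>i\<in>{1..L-1}. \<Sum>r<d i. \<beta> i r * S i r * ((\<Sum>m<d 1. \<Omega> i 1 r m * W 1 m j) * x j))"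
    unfolding Pbeta_def Pblock_def by (simp add: sum_distrib_right sum_distrib_left mult_ac)
  also have "\<dots> = (\<Sum>i\<in>{1..L-1}. \<Sum>r<d i. \<beta> i r * S i r * (\<Sum>j<d 0. (\<Sum>m<d 1. \<Omega> i 1 r m * W 1 m j) * x j))"
    by (simp add: sum.swap[of _ "{..<d 0}"] sum_distrib_left)
  finally have P: "(\<Sum>j<d 0. Pbeta L d W l u Zp Zn \<alpha> \<beta> j * x j)
      = (\<Sum>i\<in>{1..L-1}. \<Sum>r<d i. \<beta> i r * S i r * input_term i r)"
    unfolding input_term_def sum_vec_mat_vec_assoc .
  have q: "qbeta L d W b l u Zp Zn \<alpha> \<beta> = (\<Sum>i\<in>{1..L-1}. \<Sum>r<d i. \<beta> i r * S i r * (bias_term i r + relax_term i r))"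
    unfolding qbeta_def qblock_def bias_term_def relax_term_def
    by (simp add: sum_distrib_left algebra_simps)
  have c: "cconst L d W b l u Zp Zn \<alpha> \<beta> = bias_term L 0 + relax_term L 0"
    unfolding cconst_def bias_term_def relax_term_def ..
  show ?thesis
    unfolding bound_obj_def q c distrib_right sum.distrib a P
    by (simp add: algebra_simps sum.distrib)
qed

lemma bound_obj_eq_relaxed_pre:
  assumes "1 \<le> L" "0 < d L"
  shows "bound_obj L d W b l u Zp Zn \<alpha> \<beta> x
    = relaxed_pre L 0 + (\<Sum>i\<in>{1..<L}. \<Sum>r<d i. \<beta> i r * S i r * relaxed_pre i r)"
proof -
  have "{1..L-1} = {1..<L}"
    by auto
  then show ?thesis
    using assms by (simp add: bound_obj_eq_terms relaxed_pre_closed_form)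
qed

definition pre_error :: "nat \<Rightarrow> nat \<Rightarrow> real" where
  "pre_error i j = zpre d W b i x j - relaxed_pre i j"

definition post_error :: "nat \<Rightarrow> nat \<Rightarrow> real" where
  "post_error i j = zhat d W b i x j - relaxed_post i j"

definition relu_residual :: "nat \<Rightarrow> nat \<Rightarrow> real" where
  "relu_residual i j = zhat d W b i x j - D i j * zpre d W b i x j - b_low i j"

definition backprop_row :: "nat \<Rightarrow> nat \<Rightarrow> real" where
  "backprop_row i j = A i j * D i j + \<beta> i j * S i j"

lemma pre_error_Suc: "pre_error (Suc i) j = (\<Sum>c<d i. W (Suc i) j c * post_error i c)"
  by (simp add: pre_error_def post_error_def zpre_def relaxed_pre_def sum_subtractf right_diff_distrib)

lemma post_error_Suc: "post_error (Suc i) j = relu_residual (Suc i) j + D (Suc i) j * pre_error (Suc i) j"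
  unfolding post_error_def relu_residual_def pre_error_def relaxed_post_Suc by (simp add: algebra_simps)

lemma Arow_last: "A (L - 1) c = W L 0 c"
  by (simp add: Arow_def)

lemma Arow_backprop:
  assumes "Suc i \<le> L - 1"
  shows "A i c = (\<Sum>j<d (Suc i). backprop_row (Suc i) j * W (Suc i) j c)"
proof -
  have "L - 1 - i = Suc (L - 1 - Suc i)" "L - 1 - (L - 1 - Suc i) = Suc i"
    using assms by auto
  then show ?thesis
    by (simp add: Arow_def backprop_row_def Dmat_def)
qed

definition weighted_error :: "nat \<Rightarrow> real" where
  "weighted_error i = (\<Sum>c<d i. A i c * post_error i c)"

lemma weighted_error_telescope:
  "i \<le> L - 1 \<Longrightarrow> weighted_error i
    = (\<Sum>k\<in>{1..i}. (\<Sum>c<d k. A k c * relu_residual k c) - (\<Sum>c<d k. \<beta> k c * S k c * pre_error k c))"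
proof (induction i)
  case 0
  then show ?case
    by (simp add: weighted_error_def post_error_def)
next
  case (Suc i)
  have "(\<Sum>j<d (Suc i). backprop_row (Suc i) j * pre_error (Suc i) j) = weighted_error i"
    using Suc.prems
    by (simp add: pre_error_Suc weighted_error_def Arow_backprop sum_vec_mat_vec_assoc[symmetric])
  then have "weighted_error (Suc i) = (\<Sum>c<d (Suc i). A (Suc i) c * relu_residual (Suc i) c)
      - (\<Sum>c<d (Suc i). \<beta> (Suc i) c * S (Suc i) c * pre_error (Suc i) c) + weighted_error i"
    by (simp add: weighted_error_def post_error_Suc backprop_row_def algebra_simps
        sum.distrib sum_subtractf)
  then show ?case
    using Suc by simp
qed

lemma pre_error_output:
  assumes "1 \<le> L"
  shows "pre_error L 0 = (\<Sum>k\<in>{1..<L}. (\<Sum>c<d k. A k c * relu_residual k c)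
    - (\<Sum>c<d k. \<beta> k c * S k c * pre_error k c))"
proof -
  have "pre_error L 0 = weighted_error (L - 1)"
    using assms pre_error_Suc[of "L - 1" 0] Arow_last by (simp add: weighted_error_def)
  also have "\<dots> = (\<Sum>k\<in>{1..L-1}. (\<Sum>c<d k. A k c * relu_residual k c)
    - (\<Sum>c<d k. \<beta> k c * S k c * pre_error k c))"
    by (rule weighted_error_telescope) simp
  also have "{1..L-1} = {1..<L}"
    by auto
  finally show ?thesis .
qed

lemma net_out_minus_bound_obj:
  assumes "1 \<le> L" "0 < d L"
  shows "net_out L d W b x - bound_obj L d W b l u Zp Zn \<alpha> \<beta> x
    = (\<Sum>k\<in>{1..<L}. \<Sum>c<d k. A k c * relu_residual k c)
      - (\<Sum>k\<in>{1..<L}. \<Sum>c<d k. \<beta> k c * S k c * zpre d W b k x c)"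
proof -
  have "net_out L d W b x = relaxed_pre L 0 + pre_error L 0"
    by (simp add: net_out_def pre_error_def)
  moreover have "(\<Sum>k\<in>{1..<L}. \<Sum>c<d k. \<beta> k c * S k c * zpre d W b k x c)
      = (\<Sum>k\<in>{1..<L}. \<Sum>c<d k. \<beta> k c * S k c * relaxed_pre k c)
        + (\<Sum>k\<in>{1..<L}. \<Sum>c<d k. \<beta> k c * S k c * pre_error k c)"
    unfolding sum.distrib[symmetric] by (intro sum.cong refl) (simp add: pre_error_def algebra_simps)
  ultimately show ?thesis
    using assms by (simp add: bound_obj_eq_relaxed_pre pre_error_output sum_subtractf)
qed

lemma Arow_relu_residual_nonneg:
  assumes "1 \<le> k"
    and "l k c \<le> zpre d W b k x c" "zpre d W b k x c \<le> u k c"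
    and "c \<in> Zp k \<Longrightarrow> 0 \<le> zpre d W b k x c" "c \<in> Zn k \<Longrightarrow> zpre d W b k x c < 0"
    and "0 \<le> \<alpha> k c" "\<alpha> k c \<le> 1"
  shows "0 \<le> A k c * relu_residual k c"
proof -
  obtain k' where "k = Suc k'"
    using assms(1) by (cases k) auto
  then have "zhat d W b k x c = relu (zpre d W b k x c)"
    by (simp only: zhat_Suc_eq_relu)
  then have "relu_residual k c = relu (zpre d W b k x c)
      - Dentry l u Zp Zn \<alpha> k (A k c) c * zpre d W b k x c - bentry l u Zp Zn k (A k c) c"
    by (simp add: relu_residual_def Dmat_def blow_def)
  then show ?thesis
    using assms(2-) by (simp add: relu_relaxation_residual_nonneg)
qed

lemma bound_obj_le_net_out:
  assumes "1 \<le> L" "0 < d L"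
    and split: "split_sat L d W b Zp Zn x"
    and bounds: "\<forall>i\<in>{1..L}. \<forall>j<d i. l i j \<le> zpre d W b i x j \<and> zpre d W b i x j \<le> u i j"
    and \<alpha>: "\<forall>i\<in>{1..L-1}. \<forall>j<d i. 0 \<le> \<alpha> i j \<and> \<alpha> i j \<le> 1"
    and \<beta>: "\<forall>i\<in>{1..L-1}. \<forall>j<d i. 0 \<le> \<beta> i j"
  shows "bound_obj L d W b l u Zp Zn \<alpha> \<beta> x \<le> net_out L d W b x"
proof -
  have split_k: "(\<forall>j\<in>Zp k. 0 \<le> zpre d W b k x j) \<and> (\<forall>j\<in>Zn k. zpre d W b k x j < 0)"
    if "k \<in> {1..<L}" for k
    using split that unfolding split_sat_def by auto
  have "0 \<le> A k c * relu_residual k c" if "k \<in> {1..<L}" "c < d k" for k c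
    using that split_k[OF that(1)] bounds \<alpha> by (intro Arow_relu_residual_nonneg) auto
  then have "0 \<le> (\<Sum>k\<in>{1..<L}. \<Sum>c<d k. A k c * relu_residual k c)"
    by (intro sum_nonneg) auto
  moreover have "\<beta> k c * S k c * zpre d W b k x c \<le> 0" if "k \<in> {1..<L}" "c < d k" for k c
  proof -
    have "S k c * zpre d W b k x c \<le> 0"
      using split_k[OF that(1)] by (auto simp: Sdiag_def)
    moreover have "0 \<le> \<beta> k c"
      using that \<beta> by auto
    ultimately show ?thesis
      by (simp add: mult.assoc mult_nonneg_nonpos)
  qed
  then have "(\<Sum>k\<in>{1..<L}. \<Sum>c<d k. \<beta> k c * S k c * zpre d W b k x c) \<le> 0"
    by (intro sum_nonpos) auto
  ultimately show ?thesis
    using net_out_minus_bound_obj[OF assms(1,2)] by linarith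
qed

end

theorem theorem1:
  fixes L :: nat and d :: "nat \<Rightarrow> nat"
    and W :: "nat \<Rightarrow> nat \<Rightarrow> nat \<Rightarrow> real" and b :: "nat \<Rightarrow> nat \<Rightarrow> real"
    and C :: "(nat \<Rightarrow> real) set"
    and Zp Zn :: "nat \<Rightarrow> nat set"
    and l u :: "nat \<Rightarrow> nat \<Rightarrow> real"
    and \<alpha> \<beta> :: "nat \<Rightarrow> nat \<Rightarrow> real"
  assumes "L \<ge> 1" and "d L = 1"
    and "\<forall>i\<in>{1..L-1}. Zp i \<subseteq> {..<d i} \<and> Zn i \<subseteq> {..<d i} \<and> Zp i \<inter> Zn i = {}"
    and "\<forall>x\<in>C. split_sat L d W b Zp Zn x \<longrightarrow>
           (\<forall>i\<in>{1..L}. \<forall>j<d i. l i j \<le> zpre d W b i x j \<and> zpre d W b i x j \<le> u i j)"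
    and "\<forall>i\<in>{1..L-1}. \<forall>j<d i. 0 \<le> \<alpha> i j \<and> \<alpha> i j \<le> 1"
    and "\<forall>i\<in>{1..L-1}. \<forall>j<d i. 0 \<le> \<beta> i j"
  shows "(INF x\<in>C. ereal (bound_obj L d W b l u Zp Zn \<alpha> \<beta> x))
           \<le> (INF x\<in>{x\<in>C. split_sat L d W b Zp Zn x}. ereal (net_out L d W b x))"
proof (rule INF_greatest)
  fix x
  assume x: "x \<in> {x\<in>C. split_sat L d W b Zp Zn x}"
  then have "bound_obj L d W b l u Zp Zn \<alpha> \<beta> x \<le> net_out L d W b x"
    using assms by (intro bound_obj_le_net_out) auto
  then show "(INF x\<in>C. ereal (bound_obj L d W b l u Zp Zn \<alpha> \<beta> x)) \<le> ereal (net_out L d W b x)"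
    using x by (intro INF_lower2[of x]) auto
qed

end
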